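(* Let $\Phi_M$ be the measurement channel of a projective dichotomic qubit measurement $M=\{M_0,M_1\}$. The only way for $\Phi_M$ and another dichotomic qubit measurement channel $\Phi_N$, $N=\{N_0,N_1\}$, to form a Maximal Entanglement Worst Case pair is if $N$ is a biased version of the same measurement. For instance, if $M_0=\begin{pmatrix}1&0\\0&0\end{pmatrix}$, $M_1=\begin{pmatrix}0&0\\0&1\end{pmatrix}$, then necessarily $N_0=\begin{pmatrix}\alpha&0\\0&0\end{pmatrix}$, $N_1=\begin{pmatrix}1-\alpha&0\\0&1\end{pmatrix}$ with $\alpha\in[0,1]$.
   Context: The measurement channel of a POVM $M$ is $\Phi_M(\rho)=\sum_i\operatorname{Tr}(\rho M_i)\,|i\rangle\langle i|$. With $\Delta_\Phi=\Phi_M-\Phi_N$, input dimension $d=2$, Choi operator $J(\mathcal{S})=\sum_{ij}\mathcal{S}(|i\rangle\langle j|)\otimes|i\rangle\langle j|$, ME-norm $\|\mathcal{S}\|_{\mathrm{ME}}=\|J(\mathcal{S})/d\|_1$ and diamond norm $\|\mathcal{S}\|_\diamond=\max_{\rho_{AA'}}\|(\mathcal{S}\otimes I_{A'})\rho_{AA'}\|_1$, the pair is Maximal Entanglement Worst Case (MEWC) if $\|\Delta_\Phi\|_\diamond=d\|\Delta_\Phi\|_{\mathrm{ME}}$; for dichotomic qubit measurements with $M_1\neq N_1$ this is equivalent to $\det(M_0-N_0)=0$. *)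

theory Defs
  imports "Jordan_Normal_Form.Schur_Decomposition" "Jordan_Normal_Form.Char_Poly"
begin

definition mtrace :: "complex mat \<Rightarrow> complex" where
  "mtrace A = (\<Sum>i<dim_row A. A $$ (i, i))"

definition psd_mat :: "nat \<Rightarrow> complex mat \<Rightarrow> bool" where
  "psd_mat n A \<longleftrightarrow> A \<in> carrier_mat n n \<and> mat_adjoint A = A \<and>
     (\<forall>v \<in> carrier_vec n. 0 \<le> Re (conjugate v \<bullet> (A *\<^sub>v v)))"

definition povm2 :: "complex mat \<Rightarrow> complex mat \<Rightarrow> bool" where
  "povm2 P0 P1 \<longleftrightarrow> psd_mat 2 P0 \<and> psd_mat 2 P1 \<and> P0 + P1 = 1\<^sub>m 2"

definition proj_meas2 :: "complex mat \<Rightarrow> complex mat \<Rightarrow> bool" where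
  "proj_meas2 P0 P1 \<longleftrightarrow> povm2 P0 P1 \<and> P0 * P0 = P0 \<and> P1 * P1 = P1"

(* Kronecker product, index (i,k) |-> i * dim B + k *)
definition kron :: "complex mat \<Rightarrow> complex mat \<Rightarrow> complex mat" where
  "kron A B = mat (dim_row A * dim_row B) (dim_col A * dim_col B)
     (\<lambda>(r, c). A $$ (r div dim_row B, c div dim_col B) * B $$ (r mod dim_row B, c mod dim_col B))"

definition unit2 :: "nat \<Rightarrow> nat \<Rightarrow> complex mat" where
  "unit2 i j = mat 2 2 (\<lambda>(k, l). if k = i \<and> l = j then 1 else 0)"

definition meas_channel :: "complex mat \<Rightarrow> complex mat \<Rightarrow> complex mat \<Rightarrow> complex mat" where
  "meas_channel P0 P1 X = mat 2 2 (\<lambda>(i, j). if i = j then mtrace (X * (if i = 0 then P0 else P1)) else 0)"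

definition delta_channel :: "complex mat \<Rightarrow> complex mat \<Rightarrow> complex mat \<Rightarrow> complex mat \<Rightarrow> complex mat \<Rightarrow> complex mat" where
  "delta_channel M0 M1 N0 N1 X = meas_channel M0 M1 X - meas_channel N0 N1 X"

(* block (b,b') of a 4x4 operator on A (x) A', A = A' = C^2 *)
definition block2 :: "complex mat \<Rightarrow> nat \<Rightarrow> nat \<Rightarrow> complex mat" where
  "block2 \<rho> b b' = mat 2 2 (\<lambda>(a, a'). \<rho> $$ (2 * a + b, 2 * a' + b'))"

(* (S (x) I_{A'}) rho, A' = C^2 *)
definition tensor_id2 :: "(complex mat \<Rightarrow> complex mat) \<Rightarrow> complex mat \<Rightarrow> complex mat" where
  "tensor_id2 S \<rho> =
     kron (S (block2 \<rho> 0 0)) (unit2 0 0) + kron (S (block2 \<rho> 0 1)) (unit2 0 1) +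
     kron (S (block2 \<rho> 1 0)) (unit2 1 0) + kron (S (block2 \<rho> 1 1)) (unit2 1 1)"

definition choi2 :: "(complex mat \<Rightarrow> complex mat) \<Rightarrow> complex mat" where
  "choi2 S =
     kron (S (unit2 0 0)) (unit2 0 0) + kron (S (unit2 0 1)) (unit2 0 1) +
     kron (S (unit2 1 0)) (unit2 1 0) + kron (S (unit2 1 1)) (unit2 1 1)"

definition sq_singular_values :: "complex mat \<Rightarrow> complex list" where
  "sq_singular_values A = (SOME as. char_poly (mat_adjoint A * A) = (\<Prod>a\<leftarrow>as. [:- a, 1:]))"

definition trace_norm :: "complex mat \<Rightarrow> real" where
  "trace_norm A = (\<Sum>a\<leftarrow>sq_singular_values A. sqrt (cmod a))"

definition density_mat :: "nat \<Rightarrow> complex mat \<Rightarrow> bool" where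
  "density_mat n \<rho> \<longleftrightarrow> psd_mat n \<rho> \<and> mtrace \<rho> = 1"

(* diamond norm for maps on qubit inputs (ancilla A' of dimension d = 2) *)
definition diamond_norm2 :: "(complex mat \<Rightarrow> complex mat) \<Rightarrow> real" where
  "diamond_norm2 S = Sup {trace_norm (tensor_id2 S \<rho>) | \<rho>. density_mat 4 \<rho>}"

definition me_norm2 :: "(complex mat \<Rightarrow> complex mat) \<Rightarrow> real" where
  "me_norm2 S = trace_norm ((1 / 2 :: complex) \<cdot>\<^sub>m choi2 S)"

definition MEWC :: "complex mat \<Rightarrow> complex mat \<Rightarrow> complex mat \<Rightarrow> complex mat \<Rightarrow> bool" where
  "MEWC M0 M1 N0 N1 \<longleftrightarrow>
     diamond_norm2 (delta_channel M0 M1 N0 N1) = 2 * me_norm2 (delta_channel M0 M1 N0 N1)"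

end

theory Submission
  imports Defs
begin

(*
  Write D = M0 - N0. On every input, (Delta (x) I) rho is block diagonal, diag(C, -C), where C
  pairs the 2x2 blocks of rho with D; likewise the normalised Choi matrix is diag(D^T/2, -D^T/2).
  Decomposing D = l1 P1 + l2 P2 spectrally, the ME-norm is |l1| + |l2|, whereas C becomes a
  combination of the positive matrices C(P1), C(P2) of total trace 1, so by the triangle
  inequality for the trace norm of Hermitian 2x2 matrices the diamond norm is at most
  2 max(|l1|, |l2|). Hence MEWC forces l1 l2 = det D = 0.
  For a rank-one projector M0 = |m><m| put al = <m|N0|m> and ga = <m'|N0|m'> (m' orthogonal
  to m). Then det (M0 - N0) = -(1 - al) ga - |<m|N0|m'>|^2, and both terms are nonpositive
  because 0 <= N0 <= 1. So det (M0 - N0) = 0 makes N0 diagonal in the basis m, m' with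
  al = 1 or ga = 0, which are the two biased versions of M.
*)

lemma degree_prod_mset_linear_factors:
  "degree (\<Prod>a\<in>#(A::'a::idom multiset). [:-a, 1:]) = size A"
proof (induction A)
  case (add x A)
  have "(\<Prod>a\<in>#A. [:-a, 1:]) \<noteq> (0::'a poly)"
    by (auto simp add: prod_mset_zero_iff simp del: mult_pCons_left)
  then have "degree ([:-x, 1:] * (\<Prod>a\<in>#A. [:-a, 1:])) = 1 + degree (\<Prod>a\<in>#A. [:-a, 1:])"
    by (subst degree_mult_eq) auto
  then show ?case using add by (simp del: mult_pCons_left)
qed simp

lemma prod_mset_linear_factors_inj:
  fixes A B :: "'a::idom multiset"
  assumes "(\<Prod>a\<in>#A. [:-a, 1:]) = (\<Prod>a\<in>#B. [:-a, 1:])"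
  shows "A = B"
  using assms
proof (induction A arbitrary: B)
  case empty
  then show ?case
    using degree_prod_mset_linear_factors[of B] by simp
next
  case (add x A)
  have "poly (\<Prod>a\<in>#B. [:-a, 1:]) x = 0"
    using add.prems[symmetric] by (simp del: mult_pCons_left)
  then have "x \<in># B"
    by (auto simp add: poly_prod_mset prod_mset_zero_iff simp del: mult_pCons_left)
  then obtain B' where B: "B = add_mset x B'" by (metis mset_add)
  have "(\<Prod>a\<in>#A. [:-a, 1:]) = (\<Prod>a\<in>#B'. [:-a, 1:])"
    using add.prems B by (simp del: mult_pCons_left)
  then show ?case using add.IH B by simp
qed

lemma char_poly_sq_singular_values:
  assumes "A \<in> carrier_mat n n"
  shows "char_poly (mat_adjoint A * A) = (\<Prod>a\<leftarrow>sq_singular_values A. [:-a, 1:])"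
proof -
  have "mat_adjoint A * A \<in> carrier_mat n n"
    using assms by (auto simp: mat_adjoint_def)
  then obtain as where "char_poly (mat_adjoint A * A) = (\<Prod>a\<leftarrow>as. [:-a, 1:])"
    using char_poly_factorized by blast
  then show ?thesis
    unfolding sq_singular_values_def by (rule someI)
qed

lemma trace_norm_eqI:
  assumes "char_poly (mat_adjoint A * A) = (\<Prod>a\<leftarrow>L. [:-a, 1:])"
  shows "trace_norm A = (\<Sum>a\<leftarrow>L. sqrt (cmod a))"
proof -
  have "char_poly (mat_adjoint A * A) = (\<Prod>a\<leftarrow>sq_singular_values A. [:-a, 1:])"
    unfolding sq_singular_values_def by (rule someI[of _ L]) (rule assms)
  then have "(\<Prod>a\<leftarrow>sq_singular_values A. [:-a, 1:]) = (\<Prod>a\<leftarrow>L. [:-a, 1:])"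
    using assms by simp
  then have "(\<Prod>a\<in>#mset (sq_singular_values A). [:-a, 1:]) = (\<Prod>a\<in>#mset L. [:-a, 1:])"
    unfolding mset_map[symmetric] prod_mset_prod_list .
  then have "mset (sq_singular_values A) = mset L"
    by (rule prod_mset_linear_factors_inj)
  then show ?thesis
    unfolding trace_norm_def by (metis mset_map sum_mset_sum_list)
qed

lemma sum_lessThan_2: "(\<Sum>i<2. f i) = f 0 + f (1::nat)"
  by (simp add: numeral_2_eq_2)

lemma sum_lessThan_4: "(\<Sum>i<4. f i) = f 0 + f 1 + f 2 + f (3::nat)"
  by (simp add: numeral_eq_Suc)

lemma less_4_cases_iff: "(i::nat) < 4 \<longleftrightarrow> i = 0 \<or> i = 1 \<or> i = 2 \<or> i = 3"
  by auto

lemma dim_mat_adjoint [simp]: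
  "dim_row (mat_adjoint A) = dim_col A" "dim_col (mat_adjoint A) = dim_row A"
  unfolding mat_adjoint_def by auto

lemma index_mat_adjoint [simp]:
  "i < dim_col A \<Longrightarrow> j < dim_row A \<Longrightarrow> mat_adjoint A $$ (i, j) = cnj (A $$ (j, i))"
  unfolding mat_adjoint_def by (simp add: mat_of_rows_index)

lemma mat_adjoint_uminus: "mat_adjoint (- A) = - mat_adjoint (A :: complex mat)"
  by (rule eq_matI) auto

lemma uminus_zero_mat [simp]: "- 0\<^sub>m n m = (0\<^sub>m n m :: 'a :: group_add mat)"
  by (rule eq_matI) auto

definition diag_neg_block :: "complex mat \<Rightarrow> complex mat" where
  "diag_neg_block S = four_block_mat S (0\<^sub>m (dim_row S) (dim_col S)) (0\<^sub>m (dim_row S) (dim_col S)) (- S)"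

lemma mat_adjoint_diag_neg_block:
  assumes "S \<in> carrier_mat n n"
  shows "mat_adjoint (diag_neg_block S) = diag_neg_block (mat_adjoint S)"
  by (rule eq_matI) (use assms in \<open>auto simp: diag_neg_block_def four_block_mat_def\<close>)

lemma trace_norm_diag_neg_block:
  assumes S: "S \<in> carrier_mat n n"
  shows "trace_norm (diag_neg_block S) = 2 * trace_norm S"
proof -
  let ?Q = "mat_adjoint S * S"
  have adj: "mat_adjoint S \<in> carrier_mat n n" and Q: "?Q \<in> carrier_mat n n"
    using S by (auto simp: mat_adjoint_def)
  have "mat_adjoint (diag_neg_block S) * diag_neg_block S
      = four_block_mat ?Q (0\<^sub>m n n) (0\<^sub>m n n) ?Q"
    unfolding mat_adjoint_diag_neg_block[OF S] using S adj unfolding diag_neg_block_def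
    by (simp add: mult_four_block_mat[OF adj _ _ uminus_carrier_mat[OF adj] S _ _ uminus_carrier_mat[OF S]]
        mat_adjoint_uminus)
  then have "char_poly (mat_adjoint (diag_neg_block S) * diag_neg_block S) = char_poly ?Q * char_poly ?Q"
    using char_poly_factorized[OF Q] by (intro char_poly_0_block[OF _ _ _ Q _ Q]) auto
  also have "\<dots> = (\<Prod>a\<leftarrow>sq_singular_values S @ sq_singular_values S. [:-a, 1:])"
    by (simp add: char_poly_sq_singular_values[OF S])
  finally have "trace_norm (diag_neg_block S)
      = (\<Sum>a\<leftarrow>sq_singular_values S @ sq_singular_values S. sqrt (cmod a))"
    by (rule trace_norm_eqI)
  then show ?thesis
    by (simp add: trace_norm_def)
qed

lemma det_mat2:
  "(A :: 'a :: comm_ring_1 mat) \<in> carrier_mat 2 2 \<Longrightarrow> det A = A$$(0,0) * A$$(1,1) - A$$(0,1) * A$$(1,0)"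
  by (subst laplace_expansion_column[of A 2 0])
    (simp_all add: cofactor_def mat_delete_def numeral_2_eq_2 lessThan_Suc det_def)

lemma char_poly_mat2:
  assumes A: "(A :: complex mat) \<in> carrier_mat 2 2"
  shows "char_poly A = [:det A, - (A$$(0,0) + A$$(1,1)), 1:]"
proof -
  have "char_poly A = det (char_poly_matrix A)" by (simp add: char_poly_def)
  also have "\<dots> = [:A$$(0,0) * A$$(1,1) - A$$(0,1) * A$$(1,0), - (A$$(0,0) + A$$(1,1)), 1:]"
    using A by (subst det_mat2) (simp_all add: char_poly_matrix_def algebra_simps)
  finally show ?thesis using det_mat2[OF A] by simp
qed

lemma char_poly_mat2_square:
  assumes H: "(H :: complex mat) \<in> carrier_mat 2 2"
  shows "char_poly (H * H) = [:det H ^ 2, - ((H$$(0,0) + H$$(1,1))^2 - 2 * det H), 1:]"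
proof -
  have "H * H \<in> carrier_mat 2 2" using H by simp
  moreover have "det (H * H) = det H ^ 2"
    using H by (simp add: det_mult[OF H H] power2_eq_square)
  moreover have "(H * H)$$(0,0) + (H * H)$$(1,1) = (H$$(0,0) + H$$(1,1))^2 - 2 * det H"
    using H by (simp add: det_mat2 scalar_prod_def atLeast0LessThan sum_lessThan_2 row_def col_def power2_eq_square algebra_simps)
  ultimately show ?thesis by (simp add: char_poly_mat2)
qed

lemma hermitian2_iff:
  assumes "H \<in> carrier_mat 2 2"
  shows "mat_adjoint H = H \<longleftrightarrow> Im (H$$(0,0)) = 0 \<and> Im (H$$(1,1)) = 0 \<and> H$$(1,0) = cnj (H$$(0,1))"
proof
  assume adj: "mat_adjoint H = H"
  have "H$$(i,j) = cnj (H$$(j,i))" if "i < 2" "j < 2" for i j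
    using arg_cong[OF adj, of "\<lambda>A. A$$(i,j)"] assms that by simp
  from this[of 0 0] this[of 1 1] this[of 1 0]
  show "Im (H$$(0,0)) = 0 \<and> Im (H$$(1,1)) = 0 \<and> H$$(1,0) = cnj (H$$(0,1))"
    by (simp_all add: complex_eq_iff)
next
  assume "Im (H$$(0,0)) = 0 \<and> Im (H$$(1,1)) = 0 \<and> H$$(1,0) = cnj (H$$(0,1))"
  then show "mat_adjoint H = H"
    using assms by (intro eq_matI) (auto simp: less_2_cases_iff complex_eq_iff)
qed

lemma mat_adjoint_add:
  "A \<in> carrier_mat n m \<Longrightarrow> B \<in> carrier_mat n m \<Longrightarrow>
    mat_adjoint (A + B) = mat_adjoint A + mat_adjoint (B :: complex mat)"
  by (rule eq_matI) auto

lemma mat_adjoint_minus: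
  "A \<in> carrier_mat n m \<Longrightarrow> B \<in> carrier_mat n m \<Longrightarrow>
    mat_adjoint (A - B) = mat_adjoint A - mat_adjoint (B :: complex mat)"
  by (rule eq_matI) auto

lemma mat_adjoint_smult_real:
  "mat_adjoint (of_real c \<cdot>\<^sub>m A) = of_real c \<cdot>\<^sub>m mat_adjoint (A :: complex mat)"
  by (rule eq_matI) auto

lemma det_hermitian2:
  assumes "H \<in> carrier_mat 2 2" "mat_adjoint H = H"
  shows "det H = of_real (Re (H$$(0,0)) * Re (H$$(1,1)) - (cmod (H$$(0,1)))^2)"
proof -
  have "H$$(0,0) = of_real (Re (H$$(0,0)))" "H$$(1,1) = of_real (Re (H$$(1,1)))"
    using assms unfolding hermitian2_iff[OF assms(1)] by (simp_all add: complex_eq_iff)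
  then show ?thesis
    using assms unfolding hermitian2_iff[OF assms(1)] by (simp add: det_mat2 flip: complex_norm_square)
qed

lemma hermitian2_eigenvalues:
  assumes H: "(H :: complex mat) \<in> carrier_mat 2 2" "mat_adjoint H = H"
  obtains l1 l2 :: real where "l2 \<le> l1"
    "H$$(0,0) + H$$(1,1) = of_real (l1 + l2)" "det H = of_real (l1 * l2)"
proof -
  define p r z where "p = Re (H$$(0,0))" and "r = Re (H$$(1,1))" and "z = H$$(0,1)"
  define s where "s = sqrt ((p - r)^2 + 4 * (cmod z)^2)"
  have s2: "s^2 = (p - r)^2 + 4 * (cmod z)^2" and "s \<ge> 0"
    unfolding s_def by simp_all
  have "det H = of_real (p * r - (cmod z)^2)"
    using det_hermitian2[OF H] by (simp add: p_def r_def z_def)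
  moreover have "p * r - (cmod z)^2 = (p + r + s) / 2 * ((p + r - s) / 2)"
    using s2 by (simp add: field_simps power2_eq_square)
  moreover have "H$$(0,0) + H$$(1,1) = of_real ((p + r + s) / 2 + (p + r - s) / 2)"
    using H unfolding hermitian2_iff[OF H(1)] p_def r_def by (simp add: complex_eq_iff field_simps)
  ultimately show ?thesis
    using that[of "(p + r - s) / 2" "(p + r + s) / 2"] \<open>s \<ge> 0\<close> by simp
qed

lemma trace_norm_hermitian2:
  assumes H: "H \<in> carrier_mat 2 2" "mat_adjoint H = H"
    and tr: "H$$(0,0) + H$$(1,1) = of_real (l1 + l2)" and det: "det H = of_real (l1 * l2)"
  shows "trace_norm H = \<bar>l1\<bar> + \<bar>l2\<bar>"
proof -
  have "char_poly (mat_adjoint H * H) = [:of_real ((l1 * l2)^2), - of_real (l1^2 + l2^2), 1:]"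
    unfolding H(2) char_poly_mat2_square[OF H(1)] tr det
    by (simp add: power2_eq_square algebra_simps)
  also have "\<dots> = (\<Prod>a\<leftarrow>[of_real (l1^2), of_real (l2^2)]. [:-a, 1:])"
    by (simp add: power_mult_distrib)
  finally have "trace_norm H = (\<Sum>a\<leftarrow>[of_real (l1^2), of_real (l2^2)]. sqrt (cmod a))"
    by (rule trace_norm_eqI)
  then show ?thesis by (simp del: of_real_power)
qed

lemma two_abs_le_add_of_sq_le_mult:
  fixes c P Q :: real
  assumes "c^2 \<le> P * Q" "0 \<le> P" "0 \<le> Q"
  shows "2 * \<bar>c\<bar> \<le> P + Q"
proof (rule power2_le_imp_le)
  have "(2 * \<bar>c\<bar>)^2 \<le> 4 * (P * Q)" using assms(1) by (simp add: power2_eq_square)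
  also have "\<dots> \<le> (P + Q)^2" using sum_squares_ge_zero[of "P - Q" 0]
    by (simp add: power2_eq_square algebra_simps)
  finally show "(2 * \<bar>c\<bar>)^2 \<le> (P + Q)^2" .
qed (use assms in auto)

lemma psd2_pairing_nonneg:
  fixes a1 a2 b1 b2 :: real and x y :: complex
  assumes "0 \<le> a1" "0 \<le> a2" "0 \<le> b1" "0 \<le> b2" "(cmod x)^2 \<le> a1 * a2" "(cmod y)^2 \<le> b1 * b2"
  shows "0 \<le> a1 * b1 + a2 * b2 + 2 * Re (x * cnj y)"
proof -
  have "(cmod x * cmod y)^2 \<le> (a1 * a2) * (b1 * b2)"
    unfolding power_mult_distrib using assms by (intro mult_mono) auto
  then have "2 * \<bar>cmod x * cmod y\<bar> \<le> a1 * b1 + a2 * b2"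
    using assms by (intro two_abs_le_add_of_sq_le_mult) (auto simp: algebra_simps)
  moreover have "- Re (x * cnj y) \<le> cmod x * cmod y"
    using abs_Re_le_cmod[of "x * cnj y"] by (simp add: norm_mult)
  ultimately show ?thesis by simp
qed

lemma quadratic_form_hermitian2:
  assumes X: "X \<in> carrier_mat 2 2" "mat_adjoint X = X" and v: "v \<in> carrier_vec 2"
  shows "Re (conjugate v \<bullet> (X *\<^sub>v v))
    = Re (X$$(0,0)) * (cmod (v$0))^2 + Re (X$$(1,1)) * (cmod (v$1))^2 + 2 * Re (X$$(0,1) * cnj (v$0) * v$1)"
  using X v unfolding hermitian2_iff[OF X(1)] cmod_power2
  by (simp add: scalar_prod_def mult_mat_vec_def row_def atLeast0LessThan sum_lessThan_2 power2_eq_square algebra_simps)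

lemma psd_mat2_iff:
  "psd_mat 2 X \<longleftrightarrow> X \<in> carrier_mat 2 2 \<and> mat_adjoint X = X \<and>
     0 \<le> Re (X$$(0,0)) \<and> 0 \<le> Re (X$$(1,1)) \<and> (cmod (X$$(0,1)))^2 \<le> Re (X$$(0,0)) * Re (X$$(1,1))"
  (is "_ \<longleftrightarrow> ?X \<and> ?adj \<and> 0 \<le> ?p \<and> 0 \<le> ?r \<and> (cmod ?z)^2 \<le> ?p * ?r")
proof
  assume psd: "psd_mat 2 X"
  then have X: ?X ?adj by (simp_all add: psd_mat_def)
  define q where "q v0 v1 = ?p * (cmod v0)^2 + ?r * (cmod v1)^2 + 2 * Re (?z * cnj v0 * v1)" for v0 v1
  have q: "0 \<le> q v0 v1" for v0 v1
  proof -
    let ?v = "vec 2 (\<lambda>i. if i = 0 then v0 else v1)"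
    have "0 \<le> Re (conjugate ?v \<bullet> (X *\<^sub>v ?v))" using psd by (simp add: psd_mat_def)
    then show ?thesis unfolding q_def quadratic_form_hermitian2[OF X vec_carrier] by simp
  qed
  have p: "0 \<le> ?p" and r: "0 \<le> ?r" using q[of 1 0] q[of 0 1] by (simp_all add: q_def)
  have "0 \<le> ?r * (?p * ?r - (cmod ?z)^2)" "0 \<le> ?p * (?p * ?r - (cmod ?z)^2)"
    using q[of "of_real ?r" "- cnj ?z"] q[of "- ?z" "of_real ?p"]
    unfolding q_def cmod_power2 by (simp_all add: power2_eq_square algebra_simps)
  then have "0 \<le> (?p + ?r) * (?p * ?r - (cmod ?z)^2)" by (simp add: algebra_simps)
  moreover have "(cmod ?z)^2 \<le> 0" if "?p = 0" "?r = 0"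
    using q[of 1 "- cnj ?z"] that unfolding q_def cmod_power2 by (simp add: power2_eq_square)
  ultimately have "(cmod ?z)^2 \<le> ?p * ?r"
    using p r by (cases "?p + ?r = 0") (auto simp: zero_le_mult_iff)
  with X p r show "?X \<and> ?adj \<and> 0 \<le> ?p \<and> 0 \<le> ?r \<and> (cmod ?z)^2 \<le> ?p * ?r" by simp
next
  assume X: "?X \<and> ?adj \<and> 0 \<le> ?p \<and> 0 \<le> ?r \<and> (cmod ?z)^2 \<le> ?p * ?r"
  have "0 \<le> Re (conjugate v \<bullet> (X *\<^sub>v v))" if v: "v \<in> carrier_vec 2" for v
  proof -
    have "0 \<le> ?p * (cmod (v$0))^2 + ?r * (cmod (v$1))^2 + 2 * Re (?z * cnj (v$0 * cnj (v$1)))"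
      using X by (intro psd2_pairing_nonneg) (auto simp: norm_mult power_mult_distrib)
    then show ?thesis using X v by (simp add: quadratic_form_hermitian2 mult.assoc)
  qed
  with X show "psd_mat 2 X" by (simp add: psd_mat_def)
qed

lemma trace_mult_psd2_nonneg:
  assumes A: "psd_mat 2 A" and B: "psd_mat 2 B"
  shows "0 \<le> Re (mtrace (A * B))"
proof -
  have "A \<in> carrier_mat 2 2" "mat_adjoint A = A" "B \<in> carrier_mat 2 2" "mat_adjoint B = B"
    using A B unfolding psd_mat2_iff by simp_all
  then have "Re (mtrace (A * B)) = Re (A$$(0,0)) * Re (B$$(0,0)) + Re (A$$(1,1)) * Re (B$$(1,1))
      + 2 * Re (A$$(0,1) * cnj (B$$(0,1)))"
    using hermitian2_iff[of A] hermitian2_iff[of B]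
    by (simp add: mtrace_def sum_lessThan_2 scalar_prod_def atLeast0LessThan row_def col_def)
  moreover have "0 \<le> Re (A$$(0,0)) * Re (B$$(0,0)) + Re (A$$(1,1)) * Re (B$$(1,1))
      + 2 * Re (A$$(0,1) * cnj (B$$(0,1)))"
    using A B unfolding psd_mat2_iff by (intro psd2_pairing_nonneg) auto
  ultimately show ?thesis by linarith
qed

text \<open>For a Hermitian matrix with eigenvalues \<open>l1, l2\<close> this is
  \<open>max \<bar>l1 + l2\<bar> \<bar>l1 - l2\<bar> = \<bar>l1\<bar> + \<bar>l2\<bar>\<close>, i.e. its trace norm, in a form that is visibly subadditive.\<close>

definition herm2_norm :: "complex mat \<Rightarrow> real" where
  "herm2_norm H = max \<bar>Re (H$$(0,0) + H$$(1,1))\<bar>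
     (sqrt ((Re (H$$(0,0)) - Re (H$$(1,1)))^2 + (2 * cmod (H$$(0,1)))^2))"

lemma abs_add_abs_eq_max_abs: "\<bar>u\<bar> + \<bar>v\<bar> = max \<bar>u + v\<bar> \<bar>u - v\<bar>" for u v :: real
  by (simp add: abs_if max_def)

lemma trace_norm_eq_herm2_norm:
  assumes H: "H \<in> carrier_mat 2 2" "mat_adjoint H = H"
  shows "trace_norm H = herm2_norm H"
proof -
  obtain l1 l2 where tr: "H$$(0,0) + H$$(1,1) = of_real (l1 + l2)" and det: "det H = of_real (l1 * l2)"
    using hermitian2_eigenvalues[OF H] by metis
  define p r z where "p = Re (H$$(0,0))" and "r = Re (H$$(1,1))" and "z = H$$(0,1)"
  have pr: "p + r = l1 + l2"
    using arg_cong[OF tr, of Re] by (simp add: p_def r_def)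
  have "(p - r)^2 + (2 * cmod z)^2 = (p + r)^2 - 4 * (p * r - (cmod z)^2)"
    by (simp add: power2_eq_square algebra_simps)
  also have "\<dots> = (l1 - l2)^2"
    using det pr unfolding det_hermitian2[OF H] of_real_eq_iff p_def[symmetric] r_def[symmetric] z_def[symmetric]
    by (simp add: power2_eq_square algebra_simps)
  finally have "(Re (H$$(0,0)) - Re (H$$(1,1)))^2 + (2 * cmod (H$$(0,1)))^2 = (l1 - l2)^2"
    unfolding p_def r_def z_def .
  then have "herm2_norm H = \<bar>l1\<bar> + \<bar>l2\<bar>"
    unfolding herm2_norm_def abs_add_abs_eq_max_abs using arg_cong[OF tr, of Re] by simp
  then show ?thesis using trace_norm_hermitian2[OF H tr det] by simp
qed

lemma herm2_norm_add_le:
  assumes "A \<in> carrier_mat 2 2" "B \<in> carrier_mat 2 2"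
  shows "herm2_norm (A + B) \<le> herm2_norm A + herm2_norm B"
proof -
  define ta tb where "ta = Re (A$$(0,0) + A$$(1,1))" and "tb = Re (B$$(0,0) + B$$(1,1))"
  define xa xb where "xa = Re (A$$(0,0)) - Re (A$$(1,1))" and "xb = Re (B$$(0,0)) - Re (B$$(1,1))"
  define za zb where "za = 2 * cmod (A$$(0,1))" and "zb = 2 * cmod (B$$(0,1))"
  have "herm2_norm (A + B) = max \<bar>ta + tb\<bar> (sqrt ((xa + xb)^2 + (2 * cmod (A$$(0,1) + B$$(0,1)))^2))"
    using assms unfolding herm2_norm_def ta_def tb_def xa_def xb_def by (simp add: algebra_simps)
  also have "\<dots> \<le> max \<bar>ta\<bar> (sqrt (xa^2 + za^2)) + max \<bar>tb\<bar> (sqrt (xb^2 + zb^2))"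
  proof (rule max.boundedI)
    show "\<bar>ta + tb\<bar> \<le> max \<bar>ta\<bar> (sqrt (xa^2 + za^2)) + max \<bar>tb\<bar> (sqrt (xb^2 + zb^2))"
      using abs_triangle_ineq[of ta tb] max.cobounded1[of "\<bar>ta\<bar>"] max.cobounded1[of "\<bar>tb\<bar>"] by linarith
    have "sqrt ((xa + xb)^2 + (2 * cmod (A$$(0,1) + B$$(0,1)))^2) \<le> sqrt ((xa + xb)^2 + (za + zb)^2)"
      unfolding za_def zb_def using norm_triangle_ineq[of "A$$(0,1)" "B$$(0,1)"]
      by (intro real_sqrt_le_mono add_left_mono power_mono) auto
    also have "\<dots> \<le> sqrt (xa^2 + za^2) + sqrt (xb^2 + zb^2)"
      by (rule real_sqrt_sum_squares_triangle_ineq)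
    finally show "sqrt ((xa + xb)^2 + (2 * cmod (A$$(0,1) + B$$(0,1)))^2)
        \<le> max \<bar>ta\<bar> (sqrt (xa^2 + za^2)) + max \<bar>tb\<bar> (sqrt (xb^2 + zb^2))"
      using max.cobounded2[of _ "sqrt (xa^2 + za^2)"] max.cobounded2[of _ "sqrt (xb^2 + zb^2)"] by linarith
  qed
  also have "\<dots> = herm2_norm A + herm2_norm B"
    unfolding herm2_norm_def ta_def tb_def xa_def xb_def za_def zb_def ..
  finally show ?thesis .
qed

lemma herm2_norm_smult_real:
  assumes "A \<in> carrier_mat 2 2"
  shows "herm2_norm (of_real c \<cdot>\<^sub>m A) = \<bar>c\<bar> * herm2_norm A"
proof -
  have "sqrt ((c * Re (A$$(0,0)) - c * Re (A$$(1,1)))^2 + (2 * cmod (of_real c * A$$(0,1)))^2)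
      = \<bar>c\<bar> * sqrt ((Re (A$$(0,0)) - Re (A$$(1,1)))^2 + (2 * cmod (A$$(0,1)))^2)"
  proof -
    have "(c * Re (A$$(0,0)) - c * Re (A$$(1,1)))^2 + (2 * cmod (of_real c * A$$(0,1)))^2
        = c^2 * ((Re (A$$(0,0)) - Re (A$$(1,1)))^2 + (2 * cmod (A$$(0,1)))^2)"
      by (simp add: norm_mult power2_eq_square algebra_simps)
    then show ?thesis by (simp add: real_sqrt_mult)
  qed
  then show ?thesis
    using assms unfolding herm2_norm_def by (simp add: max_mult_distrib_left abs_mult flip: distrib_left)
qed

lemma herm2_norm_psd:
  assumes "psd_mat 2 A"
  shows "herm2_norm A = Re (A$$(0,0) + A$$(1,1))"
proof -
  define p r z where "p = Re (A$$(0,0))" and "r = Re (A$$(1,1))" and "z = cmod (A$$(0,1))"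
  have "0 \<le> p" "0 \<le> r" "z^2 \<le> p * r"
    using assms unfolding psd_mat2_iff p_def r_def z_def by simp_all
  then have "(p - r)^2 + (2 * z)^2 \<le> (p + r)^2"
    by (simp add: power2_eq_square algebra_simps)
  then have "sqrt ((p - r)^2 + (2 * z)^2) \<le> p + r"
    using real_sqrt_le_mono \<open>0 \<le> p\<close> \<open>0 \<le> r\<close> by fastforce
  then show ?thesis
    using \<open>0 \<le> p\<close> \<open>0 \<le> r\<close> unfolding herm2_norm_def p_def r_def z_def by simp
qed

lemma psd_mat2I:
  assumes "X \<in> carrier_mat 2 2" "X$$(0,0) = of_real a" "X$$(1,1) = of_real c" "X$$(1,0) = cnj (X$$(0,1))"
    "0 \<le> a" "0 \<le> c" "(cmod (X$$(0,1)))^2 \<le> a * c"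
  shows "psd_mat 2 X"
  using assms unfolding psd_mat2_iff hermitian2_iff[OF assms(1)] by simp

lemma hermitian2_eigenvalue_shifts:
  assumes H: "H \<in> carrier_mat 2 2" "mat_adjoint H = H"
    and tr: "H$$(0,0) + H$$(1,1) = of_real (l1 + l2)" and det: "det H = of_real (l1 * l2)"
  shows "Re (H$$(0,0)) + Re (H$$(1,1)) = l1 + l2"
    and "(Re (H$$(0,0)) - l2) * (Re (H$$(1,1)) - l2) = (cmod (H$$(0,1)))^2"
    and "(l1 - Re (H$$(0,0))) * (l1 - Re (H$$(1,1))) = (cmod (H$$(0,1)))^2"
proof -
  define p r z where "p = Re (H$$(0,0))" and "r = Re (H$$(1,1))" and "z = cmod (H$$(0,1))"
  have pr: "p + r = l1 + l2"
    using arg_cong[OF tr, of Re] by (simp add: p_def r_def)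
  have prz: "p * r - z^2 = l1 * l2"
    using det unfolding det_hermitian2[OF H] of_real_eq_iff p_def r_def z_def .
  have "(p - l2) * (r - l2) = (p * r - z^2) - l2 * (p + r) + l2^2 + z^2"
    "(l1 - p) * (l1 - r) = (p * r - z^2) - l1 * (p + r) + l1^2 + z^2"
    by (simp_all add: algebra_simps power2_eq_square)
  then show "p + r = l1 + l2" "(p - l2) * (r - l2) = z^2" "(l1 - p) * (l1 - r) = z^2"
    unfolding pr prz by (simp_all add: algebra_simps power2_eq_square)
qed

lemma psd_spectral_projectors2:
  assumes H: "H \<in> carrier_mat 2 2" "mat_adjoint H = H"
    and tr: "H$$(0,0) + H$$(1,1) = of_real (l1 + l2)" and det: "det H = of_real (l1 * l2)"
    and "l2 < l1"
  shows "psd_mat 2 (of_real (1 / (l1 - l2)) \<cdot>\<^sub>m (H - of_real l2 \<cdot>\<^sub>m 1\<^sub>m 2))"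
    and "psd_mat 2 (of_real (1 / (l1 - l2)) \<cdot>\<^sub>m (of_real l1 \<cdot>\<^sub>m 1\<^sub>m 2 - H))"
proof -
  define p r z where "p = Re (H$$(0,0))" and "r = Re (H$$(1,1))" and "z = H$$(0,1)"
  define s where "s = l1 - l2"
  have s: "0 < s" using \<open>l2 < l1\<close> by (simp add: s_def)
  have Hpr: "H$$(0,0) = of_real p" "H$$(1,1) = of_real r" and Hz: "H$$(1,0) = cnj z"
    using H(2) unfolding hermitian2_iff[OF H(1)] p_def r_def z_def by (simp_all add: complex_eq_iff)
  note shifts = hermitian2_eigenvalue_shifts[OF H tr det, folded p_def r_def z_def]
  have "0 \<le> (p - l2) * (r - l2)" "0 < (p - l2) + (r - l2)"
    "0 \<le> (l1 - p) * (l1 - r)" "0 < (l1 - p) + (l1 - r)"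
    using shifts s unfolding s_def by simp_all
  then have "0 \<le> p - l2" "0 \<le> r - l2" "0 \<le> l1 - p" "0 \<le> l1 - r"
    by (auto simp: zero_le_mult_iff)
  then show "psd_mat 2 (of_real (1 / (l1 - l2)) \<cdot>\<^sub>m (H - of_real l2 \<cdot>\<^sub>m 1\<^sub>m 2))"
    using H(1) Hpr Hz shifts s unfolding s_def[symmetric]
    by (intro psd_mat2I[where a = "(p - l2) / s" and c = "(r - l2) / s"])
      (auto simp: norm_mult norm_divide power_divide field_simps power2_eq_square z_def)
  show "psd_mat 2 (of_real (1 / (l1 - l2)) \<cdot>\<^sub>m (of_real l1 \<cdot>\<^sub>m 1\<^sub>m 2 - H))"
    using \<open>0 \<le> l1 - p\<close> \<open>0 \<le> l1 - r\<close> H(1) Hpr Hz shifts s unfolding s_def[symmetric]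
    by (intro psd_mat2I[where a = "(l1 - p) / s" and c = "(l1 - r) / s"])
      (auto simp: norm_mult norm_divide power_divide field_simps power2_eq_square z_def)
qed

lemma hermitian2_spectral_decomposition:
  assumes H: "(H :: complex mat) \<in> carrier_mat 2 2" "mat_adjoint H = H"
  obtains l1 l2 :: real and P1 P2 where "psd_mat 2 P1" "psd_mat 2 P2" "P1 + P2 = 1\<^sub>m 2"
    "H = of_real l1 \<cdot>\<^sub>m P1 + of_real l2 \<cdot>\<^sub>m P2"
    "H$$(0,0) + H$$(1,1) = of_real (l1 + l2)" "det H = of_real (l1 * l2)"
proof -
  obtain l1 l2 where "l2 \<le> l1" and tr: "H$$(0,0) + H$$(1,1) = of_real (l1 + l2)"
    and det: "det H = of_real (l1 * l2)"
    using hermitian2_eigenvalues[OF H] by metis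
  note shifts = hermitian2_eigenvalue_shifts[OF H tr det]
  show ?thesis
  proof (cases "l1 = l2")
    case True
    have "(Re (H$$(0,0)) - l2)^2 + (cmod (H$$(0,1)))^2
        = (Re (H$$(0,0)) - l2) * ((Re (H$$(0,0)) - l2) + (Re (H$$(1,1)) - l2))"
      using shifts(2) by (simp add: power2_eq_square algebra_simps)
    also have "\<dots> = 0" using shifts(1) True by simp
    finally have "Re (H$$(0,0)) = l1" "Re (H$$(1,1)) = l1" "H$$(0,1) = 0"
      using shifts(1) True by (simp_all add: sum_power2_eq_zero_iff)
    then have "H = of_real l1 \<cdot>\<^sub>m 1\<^sub>m 2 + of_real l2 \<cdot>\<^sub>m 0\<^sub>m 2 2"
      using H True unfolding hermitian2_iff[OF H(1)]
      by (intro eq_matI) (auto simp: less_2_cases_iff complex_eq_iff)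
    moreover have "psd_mat 2 (1\<^sub>m 2)" by (rule psd_mat2I[where a = 1 and c = 1]) auto
    moreover have "psd_mat 2 (0\<^sub>m 2 2)" by (rule psd_mat2I[where a = 0 and c = 0]) auto
    ultimately show ?thesis using that tr det by simp
  next
    case False
    then have "l2 < l1" using \<open>l2 \<le> l1\<close> by simp
    define s where "s = l1 - l2"
    have s: "0 < s" and l1: "complex_of_real l1 = of_real s + of_real l2"
      using \<open>l2 < l1\<close> by (simp_all add: s_def)
    define P1 where "P1 = of_real (1 / s) \<cdot>\<^sub>m (H - of_real l2 \<cdot>\<^sub>m 1\<^sub>m 2)"
    define P2 where "P2 = of_real (1 / s) \<cdot>\<^sub>m (of_real l1 \<cdot>\<^sub>m 1\<^sub>m 2 - H)"
    have "psd_mat 2 P1" "psd_mat 2 P2"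
      using psd_spectral_projectors2[OF H tr det \<open>l2 < l1\<close>] unfolding P1_def P2_def s_def .
    moreover have "P1 + P2 = 1\<^sub>m 2" "H = of_real l1 \<cdot>\<^sub>m P1 + of_real l2 \<cdot>\<^sub>m P2"
      using H(1) s unfolding P1_def P2_def l1
      by (auto intro!: eq_matI simp: less_2_cases_iff field_simps)
    ultimately show ?thesis using that tr det by simp
  qed
qed

definition block_trace :: "complex mat \<Rightarrow> complex mat \<Rightarrow> complex mat" where
  "block_trace \<rho> P = mat 2 2 (\<lambda>(b, b'). mtrace (block2 \<rho> b b' * P))"

lemma index_block_trace:
  assumes "P \<in> carrier_mat 2 2" "b < 2" "b' < 2"
  shows "block_trace \<rho> P $$ (b, b') = (\<Sum>a<2. \<Sum>a'<2. \<rho> $$ (2 * a + b, 2 * a' + b') * P $$ (a', a))"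
  using assms by (simp add: block_trace_def mtrace_def block2_def scalar_prod_def atLeast0LessThan)

lemma dim_block_trace [simp]: "dim_row (block_trace \<rho> P) = 2" "dim_col (block_trace \<rho> P) = 2"
  by (simp_all add: block_trace_def)

lemma block_trace_carrier: "block_trace \<rho> P \<in> carrier_mat 2 2"
  by (simp add: block_trace_def)

text \<open>The compression \<open>(I \<otimes> v)\<^sup>* \<rho> (I \<otimes> v)\<close> of \<open>\<rho>\<close> to \<open>\<complex>\<^sup>2 \<otimes> v\<close>.\<close>

definition compress2 :: "complex mat \<Rightarrow> complex vec \<Rightarrow> complex mat" where
  "compress2 \<rho> v = mat 2 2 (\<lambda>(a, a'). \<Sum>b<2. \<Sum>b'<2. cnj (v$b) * \<rho> $$ (2 * a + b, 2 * a' + b') * v$b')"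

lemma psd_compress2:
  assumes \<rho>: "psd_mat 4 \<rho>" and v: "v \<in> carrier_vec 2"
  shows "psd_mat 2 (compress2 \<rho> v)"
proof -
  have \<rho>c: "\<rho> \<in> carrier_mat 4 4" and adj: "mat_adjoint \<rho> = \<rho>"
    and pos: "\<And>w. w \<in> carrier_vec 4 \<Longrightarrow> 0 \<le> Re (conjugate w \<bullet> (\<rho> *\<^sub>v w))"
    using \<rho> unfolding psd_mat_def by auto
  have "mat_adjoint (compress2 \<rho> v) = compress2 (mat_adjoint \<rho>) v"
    using \<rho>c by (intro eq_matI) (auto simp: compress2_def sum_lessThan_2 less_2_cases_iff algebra_simps)
  then have "mat_adjoint (compress2 \<rho> v) = compress2 \<rho> v"
    unfolding adj .
  moreover have "0 \<le> Re (conjugate u \<bullet> (compress2 \<rho> v *\<^sub>v u))" if u: "u \<in> carrier_vec 2" for u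
  proof -
    define w where "w = vec 4 (\<lambda>k. u$(k div 2) * v$(k mod 2))"
    have "w$0 = u$0 * v$0" "w$1 = u$0 * v$1" "w$2 = u$1 * v$0" "w$3 = u$1 * v$1" "w \<in> carrier_vec 4"
      unfolding w_def by auto
    moreover have "conjugate u \<bullet> (compress2 \<rho> v *\<^sub>v u) = conjugate w \<bullet> (\<rho> *\<^sub>v w)"
      using u \<rho>c calculation
      by (simp add: compress2_def sum_lessThan_2 sum_lessThan_4 scalar_prod_def atLeast0LessThan mult_mat_vec_def row_def
          algebra_simps numeral_2_eq_2 numeral_3_eq_3)
    ultimately show ?thesis using pos by simp
  qed
  ultimately show ?thesis by (simp add: psd_mat_def compress2_def)
qed

lemma mat_adjoint_block_trace:
  assumes "\<rho> \<in> carrier_mat 4 4" "P \<in> carrier_mat 2 2"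
  shows "mat_adjoint (block_trace \<rho> P) = block_trace (mat_adjoint \<rho>) (mat_adjoint P)"
proof -
  have "mat_adjoint \<rho> \<in> carrier_mat 4 4" "mat_adjoint P \<in> carrier_mat 2 2"
    using assms by (auto simp: mat_adjoint_def)
  then show ?thesis
    using assms by (intro eq_matI) (auto simp: index_block_trace sum_lessThan_2 less_2_cases_iff algebra_simps)
qed

lemma quadratic_form_block_trace:
  assumes "P \<in> carrier_mat 2 2" "v \<in> carrier_vec 2"
  shows "conjugate v \<bullet> (block_trace \<rho> P *\<^sub>v v) = mtrace (compress2 \<rho> v * P)"
  using assms
  by (simp add: index_block_trace compress2_def mtrace_def sum_lessThan_2 scalar_prod_def atLeast0LessThan
      mult_mat_vec_def row_def col_def algebra_simps numeral_2_eq_2 numeral_3_eq_3)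

lemma psd_block_trace:
  assumes \<rho>: "psd_mat 4 \<rho>" and P: "psd_mat 2 P"
  shows "psd_mat 2 (block_trace \<rho> P)"
proof -
  have "\<rho> \<in> carrier_mat 4 4" "mat_adjoint \<rho> = \<rho>" "P \<in> carrier_mat 2 2" "mat_adjoint P = P"
    using \<rho> P unfolding psd_mat_def by auto
  then have "mat_adjoint (block_trace \<rho> P) = block_trace \<rho> P"
    by (simp add: mat_adjoint_block_trace)
  moreover have "0 \<le> Re (conjugate v \<bullet> (block_trace \<rho> P *\<^sub>v v))" if "v \<in> carrier_vec 2" for v
    using trace_mult_psd2_nonneg[OF psd_compress2[OF \<rho> that] P] quadratic_form_block_trace that
      \<open>P \<in> carrier_mat 2 2\<close> by simp
  ultimately show ?thesis by (simp add: psd_mat_def block_trace_carrier)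
qed

lemma block_trace_add:
  "P \<in> carrier_mat 2 2 \<Longrightarrow> Q \<in> carrier_mat 2 2 \<Longrightarrow>
    block_trace \<rho> (P + Q) = block_trace \<rho> P + block_trace \<rho> Q"
  by (intro eq_matI) (auto simp: index_block_trace sum_lessThan_2 algebra_simps)

lemma block_trace_smult:
  "P \<in> carrier_mat 2 2 \<Longrightarrow> block_trace \<rho> (c \<cdot>\<^sub>m P) = c \<cdot>\<^sub>m block_trace \<rho> P"
  by (intro eq_matI) (auto simp: index_block_trace sum_lessThan_2 algebra_simps)

lemma mtrace_block_trace_one:
  "\<rho> \<in> carrier_mat 4 4 \<Longrightarrow> mtrace (block_trace \<rho> (1\<^sub>m 2)) = mtrace \<rho>"
  by (simp add: mtrace_def index_block_trace sum_lessThan_2 sum_lessThan_4 numeral_2_eq_2 numeral_3_eq_3)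

lemma trace_norm_block_trace_le:
  assumes \<rho>: "density_mat 4 \<rho>" and P: "psd_mat 2 P1" "psd_mat 2 P2" "P1 + P2 = 1\<^sub>m 2"
  shows "trace_norm (block_trace \<rho> (of_real l1 \<cdot>\<^sub>m P1 + of_real l2 \<cdot>\<^sub>m P2)) \<le> max \<bar>l1\<bar> \<bar>l2\<bar>"
proof -
  define A B where "A = block_trace \<rho> P1" and "B = block_trace \<rho> P2"
  have \<rho>c: "\<rho> \<in> carrier_mat 4 4" and tr\<rho>: "mtrace \<rho> = 1"
    using \<rho> unfolding density_mat_def psd_mat_def by auto
  have P12: "P1 \<in> carrier_mat 2 2" "P2 \<in> carrier_mat 2 2"
    using P unfolding psd_mat_def by auto
  have A: "psd_mat 2 A" and B: "psd_mat 2 B"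
    unfolding A_def B_def using \<rho> P by (simp_all add: density_mat_def psd_block_trace)
  then have AB: "A \<in> carrier_mat 2 2" "mat_adjoint A = A" "B \<in> carrier_mat 2 2" "mat_adjoint B = B"
    unfolding psd_mat_def by auto
  have "Re (A$$(0,0) + A$$(1,1)) + Re (B$$(0,0) + B$$(1,1)) = Re (mtrace (block_trace \<rho> (P1 + P2)))"
    using P12 AB unfolding A_def B_def by (simp add: block_trace_add mtrace_def sum_lessThan_2)
  also have "\<dots> = 1" using P(3) \<rho>c tr\<rho> by (simp add: mtrace_block_trace_one)
  finally have trAB: "Re (A$$(0,0) + A$$(1,1)) + Re (B$$(0,0) + B$$(1,1)) = 1" .
  have "trace_norm (block_trace \<rho> (of_real l1 \<cdot>\<^sub>m P1 + of_real l2 \<cdot>\<^sub>m P2))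
      = herm2_norm (of_real l1 \<cdot>\<^sub>m A + of_real l2 \<cdot>\<^sub>m B)"
    using P12 AB unfolding A_def B_def
    by (simp add: block_trace_add block_trace_smult trace_norm_eq_herm2_norm mat_adjoint_add[of _ 2 2]
        mat_adjoint_smult_real)
  also have "\<dots> \<le> \<bar>l1\<bar> * herm2_norm A + \<bar>l2\<bar> * herm2_norm B"
    using herm2_norm_add_le[of "of_real l1 \<cdot>\<^sub>m A" "of_real l2 \<cdot>\<^sub>m B"] AB
    by (simp add: herm2_norm_smult_real)
  also have "\<dots> = \<bar>l1\<bar> * Re (A$$(0,0) + A$$(1,1)) + \<bar>l2\<bar> * Re (B$$(0,0) + B$$(1,1))"
    using A B by (simp add: herm2_norm_psd)
  also have "\<dots> \<le> max \<bar>l1\<bar> \<bar>l2\<bar> * Re (A$$(0,0) + A$$(1,1)) + max \<bar>l1\<bar> \<bar>l2\<bar> * Re (B$$(0,0) + B$$(1,1))"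
    using A B unfolding psd_mat2_iff by (intro add_mono mult_right_mono) auto
  also have "\<dots> = max \<bar>l1\<bar> \<bar>l2\<bar>"
    using trAB by (simp flip: distrib_left)
  finally show ?thesis .
qed

lemma tensor_id2_delta_channel:
  assumes M0: "M0 \<in> carrier_mat 2 2" and N0: "N0 \<in> carrier_mat 2 2" and \<rho>: "\<rho> \<in> carrier_mat 4 4"
  shows "tensor_id2 (delta_channel M0 (1\<^sub>m 2 - M0) N0 (1\<^sub>m 2 - N0)) \<rho>
    = diag_neg_block (block_trace \<rho> (M0 - N0))"
proof (rule eq_matI)
  fix i j assume "i < dim_row (diag_neg_block (block_trace \<rho> (M0 - N0)))"
    "j < dim_col (diag_neg_block (block_trace \<rho> (M0 - N0)))"
  then have "i < 4" "j < 4" by (auto simp: diag_neg_block_def)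
  then show "tensor_id2 (delta_channel M0 (1\<^sub>m 2 - M0) N0 (1\<^sub>m 2 - N0)) \<rho> $$ (i, j)
      = diag_neg_block (block_trace \<rho> (M0 - N0)) $$ (i, j)"
    using M0 N0 \<rho> unfolding less_4_cases_iff
    by (auto simp: diag_neg_block_def block_trace_def tensor_id2_def kron_def unit2_def delta_channel_def
        meas_channel_def mtrace_def block2_def sum_lessThan_2 scalar_prod_def atLeast0LessThan row_def col_def
        algebra_simps)
qed (auto simp: diag_neg_block_def tensor_id2_def kron_def unit2_def delta_channel_def meas_channel_def)

lemma choi2_delta_channel:
  assumes M0: "M0 \<in> carrier_mat 2 2" and N0: "N0 \<in> carrier_mat 2 2"
  shows "(1 / 2 :: complex) \<cdot>\<^sub>m choi2 (delta_channel M0 (1\<^sub>m 2 - M0) N0 (1\<^sub>m 2 - N0))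
    = diag_neg_block ((1 / 2 :: complex) \<cdot>\<^sub>m transpose_mat (M0 - N0))"
proof (rule eq_matI)
  fix i j assume "i < dim_row (diag_neg_block ((1 / 2 :: complex) \<cdot>\<^sub>m transpose_mat (M0 - N0)))"
    "j < dim_col (diag_neg_block ((1 / 2 :: complex) \<cdot>\<^sub>m transpose_mat (M0 - N0)))"
  then have "i < 4" "j < 4" using M0 N0 by (auto simp: diag_neg_block_def)
  then show "((1 / 2 :: complex) \<cdot>\<^sub>m choi2 (delta_channel M0 (1\<^sub>m 2 - M0) N0 (1\<^sub>m 2 - N0))) $$ (i, j)
      = diag_neg_block ((1 / 2 :: complex) \<cdot>\<^sub>m transpose_mat (M0 - N0)) $$ (i, j)"
    using M0 N0 unfolding less_4_cases_iff
    by (auto simp: diag_neg_block_def choi2_def kron_def unit2_def delta_channel_def meas_channel_def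
        mtrace_def sum_lessThan_2 scalar_prod_def atLeast0LessThan row_def col_def algebra_simps)
qed (use M0 N0 in \<open>auto simp: diag_neg_block_def choi2_def kron_def unit2_def delta_channel_def meas_channel_def\<close>)

lemma me_norm2_delta_channel:
  assumes M0: "M0 \<in> carrier_mat 2 2" and N0: "N0 \<in> carrier_mat 2 2"
    and herm: "mat_adjoint (M0 - N0) = M0 - N0"
    and tr: "(M0 - N0)$$(0,0) + (M0 - N0)$$(1,1) = of_real (l1 + l2)"
    and det: "det (M0 - N0) = of_real (l1 * l2)"
  shows "me_norm2 (delta_channel M0 (1\<^sub>m 2 - M0) N0 (1\<^sub>m 2 - N0)) = \<bar>l1\<bar> + \<bar>l2\<bar>"
proof -
  define D where "D = M0 - N0"
  define E where "E = (1 / 2 :: complex) \<cdot>\<^sub>m transpose_mat D"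
  have D: "D \<in> carrier_mat 2 2" unfolding D_def using N0 by (rule minus_carrier_mat)
  then have E: "E \<in> carrier_mat 2 2" and dD: "dim_row D = 2" "dim_col D = 2"
    by (simp_all add: E_def)
  have "Im (D$$(0,0)) = 0 \<and> Im (D$$(1,1)) = 0 \<and> D$$(1,0) = cnj (D$$(0,1))"
    using herm unfolding D_def[symmetric] hermitian2_iff[OF D] .
  then have "mat_adjoint E = E"
    using D E unfolding hermitian2_iff[OF E] by (simp add: E_def)
  moreover have "E$$(0,0) + E$$(1,1) = of_real (l1 / 2 + l2 / 2)"
    using tr dD unfolding D_def[symmetric] by (simp add: E_def field_simps)
  moreover have "det E = of_real (l1 / 2 * (l2 / 2))"
    using det dD unfolding D_def[symmetric] det_mat2[OF E] det_mat2[OF D] by (simp add: E_def field_simps)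
  ultimately have "trace_norm E = \<bar>l1 / 2\<bar> + \<bar>l2 / 2\<bar>"
    using trace_norm_hermitian2[OF E] by blast
  then show ?thesis
    unfolding me_norm2_def choi2_delta_channel[OF M0 N0] E_def[symmetric, unfolded D_def]
    using trace_norm_diag_neg_block[OF E] by simp
qed

lemma density_mat_ex: "\<exists>\<rho>. density_mat 4 \<rho>"
proof -
  define \<rho> where "\<rho> = mat 4 4 (\<lambda>(i, j). if i = 0 \<and> j = 0 then 1 else (0 :: complex))"
  have "psd_mat 4 \<rho>"
  proof -
    have "conjugate v \<bullet> (\<rho> *\<^sub>v v) = of_real ((cmod (v$0))^2)" if "v \<in> carrier_vec 4" for v
      using that by (simp add: \<rho>_def scalar_prod_def sum_lessThan_4 atLeast0LessThan mult_mat_vec_def row_def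
          mult.commute flip: complex_norm_square)
    moreover have "mat_adjoint \<rho> = \<rho>" by (rule eq_matI) (auto simp: \<rho>_def)
    ultimately show ?thesis by (simp add: psd_mat_def \<rho>_def)
  qed
  moreover have "mtrace \<rho> = 1" by (simp add: mtrace_def \<rho>_def sum_lessThan_4)
  ultimately show ?thesis by (auto simp: density_mat_def)
qed

lemma diamond_norm2_delta_channel_le:
  assumes M0: "M0 \<in> carrier_mat 2 2" and N0: "N0 \<in> carrier_mat 2 2"
    and P: "psd_mat 2 P1" "psd_mat 2 P2" "P1 + P2 = 1\<^sub>m 2"
    and D: "M0 - N0 = of_real l1 \<cdot>\<^sub>m P1 + of_real l2 \<cdot>\<^sub>m P2"
  shows "diamond_norm2 (delta_channel M0 (1\<^sub>m 2 - M0) N0 (1\<^sub>m 2 - N0)) \<le> 2 * max \<bar>l1\<bar> \<bar>l2\<bar>"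
  unfolding diamond_norm2_def
proof (rule cSup_least)
  show "{trace_norm (tensor_id2 (delta_channel M0 (1\<^sub>m 2 - M0) N0 (1\<^sub>m 2 - N0)) \<rho>) |\<rho>. density_mat 4 \<rho>} \<noteq> {}"
    using density_mat_ex by blast
next
  fix t assume "t \<in> {trace_norm (tensor_id2 (delta_channel M0 (1\<^sub>m 2 - M0) N0 (1\<^sub>m 2 - N0)) \<rho>) |\<rho>. density_mat 4 \<rho>}"
  then obtain \<rho> where \<rho>: "density_mat 4 \<rho>"
    and t: "t = trace_norm (tensor_id2 (delta_channel M0 (1\<^sub>m 2 - M0) N0 (1\<^sub>m 2 - N0)) \<rho>)"
    by blast
  have "\<rho> \<in> carrier_mat 4 4" using \<rho> unfolding density_mat_def psd_mat_def by simp
  then have "t = trace_norm (diag_neg_block (block_trace \<rho> (M0 - N0)))"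
    using t tensor_id2_delta_channel[OF M0 N0] by simp
  also have "\<dots> = 2 * trace_norm (block_trace \<rho> (M0 - N0))"
    by (rule trace_norm_diag_neg_block[OF block_trace_carrier])
  finally show "t \<le> 2 * max \<bar>l1\<bar> \<bar>l2\<bar>"
    unfolding D using trace_norm_block_trace_le[OF \<rho> P] by simp
qed

lemma povm2_complement:
  assumes "povm2 P0 P1"
  shows "P0 \<in> carrier_mat 2 2" "P1 = 1\<^sub>m 2 - P0"
proof -
  have P: "P0 \<in> carrier_mat 2 2" "P1 \<in> carrier_mat 2 2" "P0 + P1 = 1\<^sub>m 2"
    using assms unfolding povm2_def psd_mat_def by auto
  then show "P0 \<in> carrier_mat 2 2" by simp
  show "P1 = 1\<^sub>m 2 - P0"
  proof (rule eq_matI)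
    fix i j assume ij: "i < dim_row (1\<^sub>m 2 - P0)" "j < dim_col (1\<^sub>m 2 - P0)"
    then have "1\<^sub>m 2 $$ (i, j) = P0 $$ (i, j) + P1 $$ (i, j)"
      using P(1,2) unfolding P(3)[symmetric] by simp
    then show "P1 $$ (i, j) = (1\<^sub>m 2 - P0) $$ (i, j)"
      using ij P(1) by (simp del: index_one_mat)
  qed (use P in auto)
qed

lemma MEWC_imp_det_diff_eq_0:
  assumes M: "povm2 M0 M1" and N: "povm2 N0 N1" and MEWC: "MEWC M0 M1 N0 N1"
  shows "det (M0 - N0) = 0"
proof -
  note M0 = povm2_complement(1)[OF M] and N0 = povm2_complement(1)[OF N]
  have "mat_adjoint M0 = M0" "mat_adjoint N0 = N0"
    using M N unfolding povm2_def psd_mat_def by auto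
  then have "mat_adjoint (M0 - N0) = M0 - N0"
    using M0 N0 by (simp add: mat_adjoint_minus)
  then obtain l1 l2 P1 P2 where P: "psd_mat 2 P1" "psd_mat 2 P2" "P1 + P2 = 1\<^sub>m 2"
    and D: "M0 - N0 = of_real l1 \<cdot>\<^sub>m P1 + of_real l2 \<cdot>\<^sub>m P2"
    and tr: "(M0 - N0)$$(0,0) + (M0 - N0)$$(1,1) = of_real (l1 + l2)"
    and det: "det (M0 - N0) = of_real (l1 * l2)"
    using hermitian2_spectral_decomposition minus_carrier_mat[OF N0] by metis
  have "2 * (\<bar>l1\<bar> + \<bar>l2\<bar>) \<le> 2 * max \<bar>l1\<bar> \<bar>l2\<bar>"
    using MEWC diamond_norm2_delta_channel_le[OF M0 N0 P D]
      me_norm2_delta_channel[OF M0 N0 \<open>mat_adjoint (M0 - N0) = M0 - N0\<close> tr det]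
    unfolding MEWC_def povm2_complement(2)[OF M] povm2_complement(2)[OF N] by simp
  then have "l1 * l2 = 0" by (auto simp: max_def split: if_splits)
  then show ?thesis using det by simp
qed

lemma proj_meas2_rank_one:
  assumes P: "proj_meas2 M0 M1" and "M0 \<noteq> 0\<^sub>m 2 2" "M1 \<noteq> 0\<^sub>m 2 2"
  shows "M0$$(0,0) + M0$$(1,1) = 1 \<and> det M0 = 0"
proof -
  have M: "povm2 M0 M1" and idem: "M0 * M0 = M0"
    using P unfolding proj_meas2_def by auto
  note M0 = povm2_complement(1)[OF M] and M1 = povm2_complement(2)[OF M]
  have "mat_adjoint M0 = M0" using M unfolding povm2_def psd_mat_def by simp
  then have herm: "Im (M0$$(0,0)) = 0" "Im (M0$$(1,1)) = 0" "M0$$(1,0) = cnj (M0$$(0,1))"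
    unfolding hermitian2_iff[OF M0] by simp_all
  define a c b where "a = M0$$(0,0)" and "c = M0$$(1,1)" and "b = M0$$(0,1)"
  have bb: "cnj b * b = b * cnj b" by (simp add: mult.commute)
  have e00: "a * a + b * cnj b = a" and e01: "b * (a + c - 1) = 0" and e11: "b * cnj b + c * c = c"
    using arg_cong[OF idem, of "\<lambda>A. A $$ (0, 0)"] arg_cong[OF idem, of "\<lambda>A. A $$ (0, 1)"]
      arg_cong[OF idem, of "\<lambda>A. A $$ (1, 1)"] M0 herm bb
    by (simp_all add: a_def b_def c_def scalar_prod_def atLeast0LessThan sum_lessThan_2 row_def col_def algebra_simps)
  have det: "det M0 = a * c - b * cnj b"
    using M0 herm by (simp add: det_mat2 a_def b_def c_def)
  show ?thesis
  proof (cases "b = 0")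
    case False
    with e01 have "a + c = 1" by simp
    have "b * cnj b = a - a * a" using e00 by (simp add: eq_diff_eq add.commute)
    then have "det M0 = a * (a + c - 1)" unfolding det by (simp add: algebra_simps)
    with \<open>a + c = 1\<close> show ?thesis by (simp add: a_def c_def)
  next
    case True
    then have "a = 0 \<or> a = 1" "c = 0 \<or> c = 1" using e00 e11 by auto
    moreover have "\<not> (a = 0 \<and> c = 0)"
      using assms(2) True M0 herm by (auto intro!: eq_matI simp: a_def b_def c_def less_2_cases_iff)
    moreover have "\<not> (a = 1 \<and> c = 1)"
      using assms(3) True M0 herm unfolding M1
      by (auto intro!: eq_matI simp: a_def b_def c_def less_2_cases_iff)
    ultimately show ?thesis using det True by (auto simp: a_def c_def)
  qed
qed

lemma proj_meas2_entries:
  assumes "proj_meas2 M0 M1" "M0 \<noteq> 0\<^sub>m 2 2" "M1 \<noteq> 0\<^sub>m 2 2"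
  obtains a b where "M0$$(0,0) = of_real a" "M0$$(1,1) = of_real (1 - a)" "M0$$(0,1) = b"
    "M0$$(1,0) = cnj b" "0 \<le> a" "a \<le> 1" "(cmod b)^2 = a * (1 - a)"
proof -
  have "povm2 M0 M1" using assms(1) by (simp add: proj_meas2_def)
  then have M0: "M0 \<in> carrier_mat 2 2" and psd: "psd_mat 2 M0"
    by (rule povm2_complement(1), simp add: povm2_def)
  then have herm: "mat_adjoint M0 = M0" by (simp add: psd_mat_def)
  have rk: "M0$$(0,0) + M0$$(1,1) = 1" "det M0 = 0"
    using proj_meas2_rank_one[OF assms] by simp_all
  define a b where "a = Re (M0$$(0,0))" and "b = M0$$(0,1)"
  have "M0$$(1,1) = 1 - M0$$(0,0)" using rk(1) by (simp add: eq_diff_eq add.commute)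
  then have ent: "M0$$(0,0) = of_real a" "M0$$(1,1) = of_real (1 - a)" "M0$$(1,0) = cnj b"
    using herm unfolding hermitian2_iff[OF M0] by (simp_all add: complex_eq_iff a_def b_def)
  moreover have "0 \<le> a" "a \<le> 1"
    using psd ent unfolding psd_mat2_iff by simp_all
  moreover have "(cmod b)^2 = a * (1 - a)"
  proof -
    have "Re (M0$$(0,0)) * Re (M0$$(1,1)) - (cmod (M0$$(0,1)))^2 = 0"
      using rk(2) unfolding det_hermitian2[OF M0 herm] of_real_eq_0_iff .
    then show ?thesis using ent by (simp add: b_def)
  qed
  ultimately show ?thesis using that b_def by blast
qed

lemma povm2_entries:
  assumes "povm2 N0 N1"
  obtains x w y where "N0$$(0,0) = of_real x" "N0$$(1,1) = of_real w" "N0$$(0,1) = y"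
    "N0$$(1,0) = cnj y" "0 \<le> x" "0 \<le> w" "(cmod y)^2 \<le> x * w"
    "x \<le> 1" "w \<le> 1" "(cmod y)^2 \<le> (1 - x) * (1 - w)"
proof -
  note N0 = povm2_complement(1)[OF assms] and N1 = povm2_complement(2)[OF assms]
  have psd: "psd_mat 2 N0" "psd_mat 2 (1\<^sub>m 2 - N0)"
    using assms unfolding N1 by (simp_all add: povm2_def)
  define x w y where "x = Re (N0$$(0,0))" and "w = Re (N0$$(1,1))" and "y = N0$$(0,1)"
  have ent: "N0$$(0,0) = of_real x" "N0$$(1,1) = of_real w" "N0$$(1,0) = cnj y"
    using psd(1) unfolding psd_mat2_iff hermitian2_iff[OF N0]
    by (simp_all add: complex_eq_iff x_def w_def y_def)
  moreover have "0 \<le> x" "0 \<le> w" "(cmod y)^2 \<le> x * w"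
    "x \<le> 1" "w \<le> 1" "(cmod y)^2 \<le> (1 - x) * (1 - w)"
    using psd N0 ent unfolding psd_mat2_iff x_def w_def y_def by simp_all
  ultimately show ?thesis using that y_def by blast
qed

lemma cmod_diff_power2:
  "(cmod (u - v))^2 = (cmod u)^2 + (cmod v)^2 - 2 * Re (u * cnj v)"
  unfolding cmod_power2 by (simp add: power2_eq_square algebra_simps)

text \<open>Here \<open>b\<close> is the off-diagonal entry of the rank-one projector \<open>M0 = |m\<rangle>\<langle>m|\<close> with diagonal
  \<open>a, 1 - a\<close>, and \<open>x, w, y\<close> are the entries of \<open>N0\<close>; then \<open>al = \<langle>m|N0|m\<rangle>\<close> and
  \<open>ga = \<langle>m'|N0|m'\<rangle>\<close>. The left side is the squared Frobenius norm of \<open>N0 - al M0 - ga M1\<close>,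
  the right side is \<open>2 |\<langle>m|N0|m'\<rangle>|\<^sup>2\<close>.\<close>

lemma rank_one_projector_frobenius_identity:
  fixes a x w :: real and b y :: complex
  assumes "(cmod b)^2 = a * (1 - a)"
  defines "al \<equiv> a * x + (1 - a) * w + 2 * Re (b * cnj y)"
    and "ga \<equiv> (1 - a) * x + a * w - 2 * Re (b * cnj y)"
  shows "(x - al * a - ga * (1 - a))^2 + (w - al * (1 - a) - ga * a)^2 + 2 * (cmod (y - of_real (al - ga) * b))^2
    = 2 * (al * ga - (x * w - (cmod y)^2))"
proof -
  define b1 b2 y1 y2 where "b1 = Re b" and "b2 = Im b" and "y1 = Re y" and "y2 = Im y"
  define s where "s = b1 * y1 + b2 * y2"
  have b: "b1^2 + b2^2 = a * (1 - a)"
    using assms(1) unfolding cmod_power2 b1_def b2_def .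
  have "(x - al * a - ga * (1 - a))^2 + (w - al * (1 - a) - ga * a)^2
      + 2 * ((y1 - (al - ga) * b1)^2 + (y2 - (al - ga) * b2)^2) - 2 * (al * ga - (x * w - (y1^2 + y2^2)))
      = 2 * (4 * s + (w - x) * (1 - 2 * a))^2 * (b1^2 + b2^2 - a * (1 - a))"
    unfolding al_def ga_def s_def b1_def b2_def y1_def y2_def
    by (simp add: power2_eq_square algebra_simps)
  then have "(x - al * a - ga * (1 - a))^2 + (w - al * (1 - a) - ga * a)^2
      + 2 * ((y1 - (al - ga) * b1)^2 + (y2 - (al - ga) * b2)^2) = 2 * (al * ga - (x * w - (y1^2 + y2^2)))"
    using b by simp
  then show ?thesis
    unfolding cmod_power2 b1_def b2_def y1_def y2_def by simp
qed

lemma biased_entries_of_det_diff_eq_0: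
  fixes a x w :: real and b y :: complex
  assumes b: "(cmod b)^2 = a * (1 - a)" and a: "0 \<le> a" "a \<le> 1"
    and N0: "0 \<le> x" "0 \<le> w" "(cmod y)^2 \<le> x * w"
    and N1: "x \<le> 1" "w \<le> 1" "(cmod y)^2 \<le> (1 - x) * (1 - w)"
    and det: "(a - x) * (1 - a - w) = (cmod (b - y))^2"
  shows "\<exists>\<alpha>. 0 \<le> \<alpha> \<and> \<alpha> \<le> 1 \<and>
    ((x = \<alpha> * a \<and> w = \<alpha> * (1 - a) \<and> y = of_real \<alpha> * b) \<or>
     (x = a + (1 - \<alpha>) * (1 - a) \<and> w = (1 - a) + (1 - \<alpha>) * a \<and> y = of_real \<alpha> * b))"
proof -
  define al ga where "al = a * x + (1 - a) * w + 2 * Re (b * cnj y)"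
    and "ga = (1 - a) * x + a * w - 2 * Re (b * cnj y)"
  have b': "(cmod (- b))^2 \<le> (1 - a) * a" using b by (simp add: algebra_simps)
  \<comment> \<open>\<open>al, 1 - al, ga, 1 - ga\<close> are \<open>tr (Mi Nj)\<close> for the four pairs\<close>
  have "0 \<le> al" "0 \<le> 1 - al" "0 \<le> ga" "0 \<le> 1 - ga"
    using psd2_pairing_nonneg[of x w a "1 - a" y b] psd2_pairing_nonneg[of "1 - x" "1 - w" a "1 - a" "- y" b]
      psd2_pairing_nonneg[of x w "1 - a" a y "- b"] psd2_pairing_nonneg[of "1 - x" "1 - w" "1 - a" a "- y" "- b"]
      N0 N1 a b b' unfolding al_def ga_def by (simp_all add: algebra_simps)
  have "x * w - (cmod y)^2 = ga"
    using det b unfolding cmod_diff_power2 ga_def by (simp add: algebra_simps)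
  then have "(x - al * a - ga * (1 - a))^2 + (w - al * (1 - a) - ga * a)^2
      + 2 * (cmod (y - of_real (al - ga) * b))^2 = - 2 * ((1 - al) * ga)"
    using rank_one_projector_frobenius_identity[OF b, of x w y] unfolding al_def ga_def
    by (simp add: algebra_simps)
  moreover have "0 \<le> (1 - al) * ga" using \<open>0 \<le> 1 - al\<close> \<open>0 \<le> ga\<close> by simp
  ultimately have "(x - al * a - ga * (1 - a))^2 = 0" "(w - al * (1 - a) - ga * a)^2 = 0"
    "(cmod (y - of_real (al - ga) * b))^2 = 0" and "(1 - al) * ga = 0"
    using zero_le_power2[of "x - al * a - ga * (1 - a)"] zero_le_power2[of "w - al * (1 - a) - ga * a"]
      zero_le_power2[of "cmod (y - of_real (al - ga) * b)"] by linarith+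
  then have "x = al * a + ga * (1 - a)" "w = al * (1 - a) + ga * a" "y = of_real (al - ga) * b"
    and "(1 - al) * ga = 0"
    by simp_all
  note N = this
  show ?thesis
  proof (cases "ga = 0")
    case True
    then show ?thesis
      using N \<open>0 \<le> al\<close> \<open>0 \<le> 1 - al\<close> by (intro exI[of _ al]) (simp add: algebra_simps)
  next
    case False
    then have "al = 1" using N(4) by simp
    then show ?thesis
      using N \<open>0 \<le> ga\<close> \<open>0 \<le> 1 - ga\<close> by (intro exI[of _ "1 - ga"]) (simp add: algebra_simps)
  qed
qed

lemma mat2_eqI:
  assumes "A \<in> carrier_mat 2 2" "B \<in> carrier_mat 2 2" "A$$(0,0) = B$$(0,0)" "A$$(0,1) = B$$(0,1)"
    "A$$(1,0) = B$$(1,0)" "A$$(1,1) = B$$(1,1)"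
  shows "A = B"
  by (rule eq_matI) (use assms in \<open>auto simp: less_2_cases_iff\<close>)

lemma biased_of_det_diff_eq_0:
  assumes M: "proj_meas2 M0 M1" "M0 \<noteq> 0\<^sub>m 2 2" "M1 \<noteq> 0\<^sub>m 2 2" and N: "povm2 N0 N1"
    and det: "det (M0 - N0) = 0"
  shows "\<exists>\<alpha>::real. 0 \<le> \<alpha> \<and> \<alpha> \<le> 1 \<and>
    ((N0 = of_real \<alpha> \<cdot>\<^sub>m M0 \<and> N1 = of_real (1 - \<alpha>) \<cdot>\<^sub>m M0 + M1) \<or>
     (N1 = of_real \<alpha> \<cdot>\<^sub>m M1 \<and> N0 = M0 + of_real (1 - \<alpha>) \<cdot>\<^sub>m M1))"
proof -
  have "povm2 M0 M1" using M(1) by (simp add: proj_meas2_def)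
  note M0 = povm2_complement(1)[OF this] and M1 = povm2_complement(2)[OF this]
  note N0 = povm2_complement(1)[OF N] and N1 = povm2_complement(2)[OF N]
  obtain a b where Ment: "M0$$(0,0) = of_real a" "M0$$(1,1) = of_real (1 - a)" "M0$$(0,1) = b"
    "M0$$(1,0) = cnj b" and a: "0 \<le> a" "a \<le> 1" "(cmod b)^2 = a * (1 - a)"
    using proj_meas2_entries[OF M] by metis
  obtain x w y where Nent: "N0$$(0,0) = of_real x" "N0$$(1,1) = of_real w" "N0$$(0,1) = y"
    "N0$$(1,0) = cnj y" and xwy: "0 \<le> x" "0 \<le> w" "(cmod y)^2 \<le> x * w"
    "x \<le> 1" "w \<le> 1" "(cmod y)^2 \<le> (1 - x) * (1 - w)"
    using povm2_entries[OF N] by metis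
  note D = minus_carrier_mat[OF N0, of M0]
  have hD: "mat_adjoint (M0 - N0) = M0 - N0"
    using M0 N0 Ment Nent unfolding hermitian2_iff[OF D] by simp
  have "Re ((M0 - N0)$$(0,0)) * Re ((M0 - N0)$$(1,1)) - (cmod ((M0 - N0)$$(0,1)))^2 = 0"
    using det unfolding det_hermitian2[OF D hD] of_real_eq_0_iff .
  then have "(a - x) * (1 - a - w) = (cmod (b - y))^2"
    using M0 N0 Ment Nent by simp
  then obtain \<alpha> where \<alpha>: "0 \<le> \<alpha>" "\<alpha> \<le> 1"
    and "(x = \<alpha> * a \<and> w = \<alpha> * (1 - a) \<and> y = of_real \<alpha> * b) \<or>
     (x = a + (1 - \<alpha>) * (1 - a) \<and> w = (1 - a) + (1 - \<alpha>) * a \<and> y = of_real \<alpha> * b)"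
    using biased_entries_of_det_diff_eq_0[OF a(3,1,2) xwy] by blast
  then show ?thesis
  proof (elim disjE conjE)
    assume xwy: "x = \<alpha> * a" "w = \<alpha> * (1 - a)" "y = of_real \<alpha> * b"
    have "N0 = of_real \<alpha> \<cdot>\<^sub>m M0"
      using M0 N0 by (intro mat2_eqI) (simp_all add: Ment[unfolded One_nat_def] Nent[unfolded One_nat_def] xwy)
    moreover have "1\<^sub>m 2 - of_real \<alpha> \<cdot>\<^sub>m M0 = of_real (1 - \<alpha>) \<cdot>\<^sub>m M0 + (1\<^sub>m 2 - M0)"
      using M0 by (intro mat2_eqI) (simp_all add: minus_carrier_mat algebra_simps)
    ultimately show ?thesis using \<alpha> unfolding N1 M1 by blast
  next
    assume xwy: "x = a + (1 - \<alpha>) * (1 - a)" "w = (1 - a) + (1 - \<alpha>) * a" "y = of_real \<alpha> * b"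
    have "N0 = M0 + of_real (1 - \<alpha>) \<cdot>\<^sub>m (1\<^sub>m 2 - M0)"
      using M0 N0 by (intro mat2_eqI)
        (simp_all add: Ment[unfolded One_nat_def] Nent[unfolded One_nat_def] xwy minus_carrier_mat algebra_simps)
    moreover have "1\<^sub>m 2 - (M0 + of_real (1 - \<alpha>) \<cdot>\<^sub>m (1\<^sub>m 2 - M0)) = of_real \<alpha> \<cdot>\<^sub>m (1\<^sub>m 2 - M0)"
      using M0 by (intro mat2_eqI) (simp_all add: minus_carrier_mat algebra_simps)
    ultimately show ?thesis using \<alpha> unfolding N1 M1 by blast
  qed
qed

theorem corollary6:
  fixes M0 M1 N0 N1 :: "complex mat"
  assumes "proj_meas2 M0 M1"
    and "M0 \<noteq> 0\<^sub>m 2 2" and "M1 \<noteq> 0\<^sub>m 2 2"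
    and "povm2 N0 N1"
    and "MEWC M0 M1 N0 N1"
  shows "\<exists>\<alpha>::real. 0 \<le> \<alpha> \<and> \<alpha> \<le> 1 \<and>
           ((N0 = complex_of_real \<alpha> \<cdot>\<^sub>m M0 \<and> N1 = complex_of_real (1 - \<alpha>) \<cdot>\<^sub>m M0 + M1) \<or>
            (N1 = complex_of_real \<alpha> \<cdot>\<^sub>m M1 \<and> N0 = M0 + complex_of_real (1 - \<alpha>) \<cdot>\<^sub>m M1))"
proof -
  have "povm2 M0 M1" using assms(1) by (simp add: proj_meas2_def)
  then have "det (M0 - N0) = 0" using assms(4,5) by (rule MEWC_imp_det_diff_eq_0)
  with assms(1-4) show ?thesis by (rule biased_of_det_diff_eq_0)
qed

end
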